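(* Let $A,B\in\mathbb{C}^{m\times n}$ and let $Q_A=A^\dagger A$. The following are equivalent: (a) $A\le^{\diamond}B$; (b) $\operatorname{rk}(B^\dagger-A^\dagger)=\operatorname{rk}((I_n-Q_A)B^\dagger)$ and $\mathcal{R}(A^* )\subseteq\mathcal{R}(B^* )$; (c) there exists an idempotent matrix $Q\in\mathbb{C}^{n\times n}$ with $A^\dagger=QB^\dagger$, and $\mathcal{R}(A^* )\subseteq\mathcal{R}(B^* )$.
   Context: For a matrix $M$, $M^*$ is its conjugate transpose, $M^\dagger$ its Moore–Penrose inverse, $\mathcal{R}(M)$ its column space, $\operatorname{rk}(M)$ its rank. Diamond partial order: for $A,B\in\mathbb{C}^{m\times n}$, $A\le^{\diamond}B$ means $\mathcal{R}(A)\subseteq\mathcal{R}(B)$, $\mathcal{R}(A^* )\subseteq\mathcal{R}(B^* )$, and $AB^*A=AA^*A$. *)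

theory Defs
  imports "HOL-Analysis.Analysis"
begin

text \<open>Complex m x n matrices are rendered as complex^'n^'m (dimensions are type parameters).\<close>

definition cadj :: "complex^'n^'m \<Rightarrow> complex^'m^'n" where
  "cadj A = (\<chi> i j. cnj (A $ j $ i))"

definition colspace :: "complex^'n^'m \<Rightarrow> (complex^'m) set" where
  "colspace M = range (\<lambda>x. M *v x)"

definition mp_inv :: "complex^'n^'m \<Rightarrow> complex^'m^'n" where
  "mp_inv A = (THE X. A ** X ** A = A \<and> X ** A ** X = X \<and>
                      cadj (A ** X) = A ** X \<and> cadj (X ** A) = X ** A)"

definition diamond_le :: "complex^'n^'m \<Rightarrow> complex^'n^'m \<Rightarrow> bool" where
  "diamond_le A B \<longleftrightarrow> colspace A \<subseteq> colspace B \<and> colspace (cadj A) \<subseteq> colspace (cadj B)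
     \<and> A ** cadj B ** A = A ** cadj A ** A"

end

theory Submission
  imports Defs
begin

text \<open>Write X = A\<dagger> and Y = B\<dagger>. Range inclusions become absorption identities:
  R(A) \<subseteq> R(B) iff BYA = A iff XBY = X, and R(A^*) \<subseteq> R(B^*) iff YBA^* = A^*, which gives YBX = X.
  Conjugating by the Hermitian projections AX and XA turns AB^*A = AA^*A into XBX = X, so A \<le>\<diamond> B
  means XBX = X, XBY = X and R(A^*) \<subseteq> R(B^*).
  Given YBX = X, these two equations say exactly that X = QY for an idempotent Q, namely Q = XB.
  For the rank condition, (I - XA)X = 0 gives (I - XA)Y = (I - XA)(Y - X), and the two equations give
  Y - X = (I - XB)(I - XA)Y, so both ranks agree. Conversely, equal ranks make I - XA injective on
  R(Y - X); since (Y - X)BX = X(I - BX) and (Y - X)(BY - I) = X(I - BY) lie in R(X), which I - XA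
  annihilates, both vanish.\<close>

lemma range_matrix_mul_subset: "range ((*v) (P ** Q)) \<subseteq> range ((*v) P)"
  by (auto simp: matrix_vector_mul_assoc[symmetric])

lemma matrix_factor_through_range:
  fixes P :: "'a::field^'n^'m" and R :: "'a^'k^'m"
  assumes "range ((*v) P) \<subseteq> range ((*v) R)"
  shows "\<exists>Z. P = R ** Z"
proof -
  have "\<forall>j. \<exists>z. P *v axis j 1 = R *v z"
    using assms by blast
  then obtain z where z: "\<And>j. P *v axis j 1 = R *v z j"
    by metis
  have "P = R ** (\<chi> i j. z j $ i)"
  proof -
    have "P $ i $ j = (R ** (\<chi> i j. z j $ i)) $ i $ j" for i j
    proof -
      have "P $ i $ j = (P *v axis j 1) $ i"
        by (simp add: matrix_vector_mult_def axis_def if_distrib if_distribR cong: if_cong)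
      then show ?thesis
        unfolding z by (simp add: matrix_vector_mult_def matrix_matrix_mult_def)
    qed
    then show ?thesis by (simp add: vec_eq_iff)
  qed
  then show ?thesis ..
qed

lemma range_matrix_mul_eq_if_dim_eq:
  fixes P :: "'a::field^'n^'m" and Q :: "'a^'k^'n"
  assumes "vec.dim (range ((*v) (P ** Q))) = vec.dim (range ((*v) P))"
  shows "range ((*v) (P ** Q)) = range ((*v) P)"
  using assms
  by (intro vec.subspace_dim_equal range_matrix_mul_subset) (auto simp: vec.subspace_image)

lemma dim_range_matrix_mul_eq_if_inj:
  fixes P :: "'a::field^'n^'m" and Q :: "'a^'k^'n"
  assumes "\<And>x. P *v (Q *v x) = 0 \<Longrightarrow> Q *v x = 0"
  shows "vec.dim (range ((*v) (P ** Q))) = vec.dim (range ((*v) Q))"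
proof -
  have span: "vec.span (range ((*v) Q)) = range ((*v) Q)"
    by (simp add: vec.span_eq_iff vec.subspace_image)
  have inj: "inj_on ((*v) P) (range ((*v) Q))"
  proof (rule inj_onI, clarify)
    fix x y assume "P *v (Q *v x) = P *v (Q *v y)"
    then have "P *v (Q *v (x - y)) = 0"
      by (simp add: matrix_vector_mult_diff_distrib)
    then have "Q *v (x - y) = 0"
      by (rule assms)
    then show "Q *v x = Q *v y" by (simp add: matrix_vector_mult_diff_distrib)
  qed
  have "vec.dim ((*v) P ` range ((*v) Q)) = vec.dim (range ((*v) Q))"
    by (rule vec.dim_image_eq[OF vec.linear_axioms]) (simp only: span inj)
  moreover have "range ((*v) (P ** Q)) = (*v) P ` range ((*v) Q)"
    by (auto simp: matrix_vector_mul_assoc[symmetric] image_iff)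
  ultimately show ?thesis by simp
qed

lemma span_columns_eq_range: "vec.span (columns (M::'a::field^'n^'m)) = range ((*v) M)"
proof
  show "vec.span (columns M) \<subseteq> range ((*v) M)"
  proof (rule vec.span_minimal)
    show "columns M \<subseteq> range ((*v) M)"
      by (auto simp: columns_def column_def matrix_vector_mult_def vec_eq_iff axis_def
          if_distrib if_distribR cong: if_cong intro!: image_eqI[where x="axis _ 1"])
  qed (simp add: vec.subspace_image)
  show "range ((*v) M) \<subseteq> vec.span (columns M)"
    using matrix_vector_mult_in_columnspace_gen by blast
qed

(* rank is the row rank, and the library identifies it with the column rank only over the reals,
   so ranks are computed through the transpose. *)

lemma rank_eq_dim_range_transpose: "rank (M::'a::field^'n^'m) = vec.dim (range ((*v) (transpose M)))"
  unfolding row_rank_def_gen by (metis columns_transpose span_columns_eq_range vec.dim_span)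

lemma rank_mul_le_right_gen: "rank ((M::'a::field^'n^'m) ** N) \<le> rank N"
  unfolding rank_eq_dim_range_transpose matrix_transpose_mul
  by (rule vec.dim_subset[OF range_matrix_mul_subset])

lemma rank_mul_eq_right_imp_factor:
  fixes M :: "'a::field^'n^'n" and N :: "'a^'k^'n"
  assumes "rank (M ** N) = rank N"
  shows "\<exists>Z. N = Z ** (M ** N)"
proof -
  have "range ((*v) (transpose N ** transpose M)) = range ((*v) (transpose N))"
    using assms unfolding rank_eq_dim_range_transpose matrix_transpose_mul
    by (rule range_matrix_mul_eq_if_dim_eq)
  then obtain Z where "transpose N = transpose N ** transpose M ** Z"
    using matrix_factor_through_range[of "transpose N" "transpose N ** transpose M"]
    by (metis equalityD2)
  then have "N = transpose Z ** (M ** N)"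
    by (metis matrix_transpose_mul transpose_transpose)
  then show ?thesis ..
qed

lemma matrix_diff_ldistrib: "(M::'a::ring_1^'n^'m) ** (N - K) = M ** N - M ** K"
  by (simp add: matrix_matrix_mult_def vec_eq_iff sum_subtractf algebra_simps)

lemma matrix_diff_rdistrib: "((M::'a::ring_1^'n^'m) - N) ** K = M ** K - N ** K"
  by (simp add: matrix_matrix_mult_def vec_eq_iff sum_subtractf algebra_simps)

lemma cadj_mult: "cadj (M ** N) = cadj N ** cadj M"
  by (simp add: cadj_def matrix_matrix_mult_def vec_eq_iff mult.commute)

lemma cadj_cadj [simp]: "cadj (cadj M) = M"
  by (simp add: cadj_def vec_eq_iff)

lemma sum_cnj_mult_self_eq_0_imp:
  fixes u :: "complex^'n"
  assumes "(\<Sum>i\<in>UNIV. cnj (u $ i) * u $ i) = 0"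
  shows "u = 0"
proof -
  have "(\<Sum>i\<in>UNIV. cnj (u $ i) * u $ i) = of_real (\<Sum>i\<in>UNIV. (cmod (u $ i))\<^sup>2)"
    unfolding of_real_sum complex_norm_square by (simp add: mult.commute)
  with assms have "(\<Sum>i\<in>UNIV. (cmod (u $ i))\<^sup>2) = 0"
    by (simp only: of_real_eq_0_iff)
  then show ?thesis
    by (simp add: sum_nonneg_eq_0_iff vec_eq_iff)
qed

lemma sum_cnj_mult_cadj:
  "(\<Sum>i\<in>UNIV. cnj (v $ i) * (cadj M *v u) $ i) = (\<Sum>j\<in>UNIV. cnj ((M *v v) $ j) * u $ j)"
proof -
  have "(\<Sum>i\<in>UNIV. cnj (v $ i) * (cadj M *v u) $ i)
      = (\<Sum>i\<in>UNIV. \<Sum>j\<in>UNIV. cnj (v $ i) * cnj (M $ j $ i) * u $ j)"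
    by (simp add: cadj_def matrix_vector_mult_def sum_distrib_left mult.assoc)
  also have "\<dots> = (\<Sum>j\<in>UNIV. \<Sum>i\<in>UNIV. cnj (v $ i) * cnj (M $ j $ i) * u $ j)"
    by (rule sum.swap)
  also have "\<dots> = (\<Sum>j\<in>UNIV. cnj ((M *v v) $ j) * u $ j)"
    by (simp add: matrix_vector_mult_def sum_distrib_left sum_distrib_right mult_ac)
  finally show ?thesis .
qed

lemma cadj_mult_self_vec_eq_0_imp: "cadj M *v (M *v v) = 0 \<Longrightarrow> M *v v = 0"
  using sum_cnj_mult_cadj[of v M "M *v v"] by (auto intro: sum_cnj_mult_self_eq_0_imp)

lemma range_cadj_mult_self: "range ((*v) (cadj A ** A)) = range ((*v) (cadj A))"
proof (rule range_matrix_mul_eq_if_dim_eq)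
  let ?dim = "\<lambda>M. vec.dim (range ((*v) M))"
  have "?dim (cadj A ** A) = ?dim A"
    by (rule dim_range_matrix_mul_eq_if_inj) (rule cadj_mult_self_vec_eq_0_imp)
  moreover have "?dim (A ** cadj A) = ?dim (cadj A)"
    by (rule dim_range_matrix_mul_eq_if_inj) (metis cadj_cadj cadj_mult_self_vec_eq_0_imp)
  moreover have "?dim (M ** N) \<le> ?dim M" for M :: "complex^'k^'l" and N :: "complex^'j^'k"
    by (rule vec.dim_subset[OF range_matrix_mul_subset])
  ultimately show "?dim (cadj A ** A) = ?dim (cadj A)"
    by (metis le_antisym)
qed

lemma cadj_eq_if_cadj_mult_self_eq: "cadj G ** G = cadj G \<Longrightarrow> cadj G = G"
  by (metis cadj_cadj cadj_mult)

definition is_penrose_inverse :: "complex^'n^'m \<Rightarrow> complex^'m^'n \<Rightarrow> bool" where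
  "is_penrose_inverse A X \<longleftrightarrow> A ** X ** A = A \<and> X ** A ** X = X \<and>
     cadj (A ** X) = A ** X \<and> cadj (X ** A) = X ** A"

(* Here A W and A^* V are the Hermitian projections onto the ranges of A and A^*,
   and A^* V W is the inverse. *)
lemma penrose_inverse_exists: "\<exists>X. is_penrose_inverse A X"
proof -
  obtain W where W: "cadj A ** A ** W = cadj A"
    using matrix_factor_through_range[OF equalityD2[OF range_cadj_mult_self]] by metis
  obtain V where V: "A ** cadj A ** V = A"
    using matrix_factor_through_range[OF equalityD2[OF range_cadj_mult_self[of "cadj A"]]]
    by (metis cadj_cadj)
  have AW: "cadj (A ** W) = A ** W"
    by (rule cadj_eq_if_cadj_mult_self_eq)
      (simp add: cadj_mult W[folded matrix_mul_assoc] flip: matrix_mul_assoc)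
  have AWA: "A ** W ** A = A"
    by (metis AW W cadj_cadj cadj_mult matrix_mul_assoc)
  define H where "H = cadj A ** V"
  have HH: "cadj H ** H = cadj H"
    by (simp add: H_def cadj_mult V[folded matrix_mul_assoc] flip: matrix_mul_assoc)
  then have H: "cadj H = H"
    by (rule cadj_eq_if_cadj_mult_self_eq)
  have AH: "A ** H = A"
    by (simp add: H_def V matrix_mul_assoc)
  have HWA: "H ** W ** A = H"
    by (metis AWA H H_def cadj_cadj cadj_mult matrix_mul_assoc)
  have "is_penrose_inverse A (H ** W)"
    unfolding is_penrose_inverse_def
    by (simp add: matrix_mul_assoc AH AWA HWA AW H HH[unfolded H] flip: H_def)
  then show ?thesis ..
qed

lemma penrose_inverse_unique:
  assumes X: "is_penrose_inverse A X" and Z: "is_penrose_inverse A Z"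
  shows "X = Z"
proof -
  have X1: "A ** X ** A = A" and X2: "X ** A ** X = X"
    and X3: "cadj (A ** X) = A ** X" and X4: "cadj (X ** A) = X ** A"
    using X unfolding is_penrose_inverse_def by auto
  have Z1: "A ** Z ** A = A" and Z2: "Z ** A ** Z = Z"
    and Z3: "cadj (A ** Z) = A ** Z" and Z4: "cadj (Z ** A) = Z ** A"
    using Z unfolding is_penrose_inverse_def by auto
  have "X = X ** cadj (A ** X)" using X2 X3 by (simp add: matrix_mul_assoc)
  also have "\<dots> = X ** cadj X ** cadj (A ** Z ** A)" by (simp add: Z1 cadj_mult matrix_mul_assoc)
  also have "\<dots> = X ** cadj (A ** X) ** cadj (A ** Z)" by (simp add: cadj_mult matrix_mul_assoc)
  also have "\<dots> = X ** A ** X ** A ** Z" by (simp add: X3 Z3 matrix_mul_assoc)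
  also have "\<dots> = X ** A ** Z" using X2 by simp
  finally have XAZ: "X = X ** A ** Z" .
  have "Z = cadj (Z ** A) ** Z" using Z2 Z4 by simp
  also have "\<dots> = cadj (A ** X ** A) ** cadj Z ** Z" by (simp add: X1 cadj_mult matrix_mul_assoc)
  also have "\<dots> = cadj (X ** A) ** cadj (Z ** A) ** Z" by (simp add: cadj_mult matrix_mul_assoc)
  also have "\<dots> = X ** A ** (Z ** A ** Z)" by (simp add: X4 Z4 matrix_mul_assoc)
  also have "\<dots> = X ** A ** Z" using Z2 by simp
  finally show ?thesis using XAZ by simp
qed

lemma is_penrose_inverse_mp_inv: "is_penrose_inverse A (mp_inv A)"
proof -
  have "\<exists>!X. is_penrose_inverse A X"
    using penrose_inverse_exists penrose_inverse_unique by blast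
  then show ?thesis
    unfolding mp_inv_def is_penrose_inverse_def[abs_def] by (rule theI')
qed

lemma colspace_subset_iff_projection:
  fixes M :: "complex^'k^'m" and N :: "complex^'n^'m"
  assumes "P ** M = M" and "P = M ** K"
  shows "colspace N \<subseteq> colspace M \<longleftrightarrow> P ** N = N"
proof
  assume "colspace N \<subseteq> colspace M"
  then obtain Z where "N = M ** Z"
    unfolding colspace_def using matrix_factor_through_range by blast
  then show "P ** N = N"
    by (simp add: assms(1) matrix_mul_assoc)
next
  assume "P ** N = N"
  then have "N = M ** (K ** N)"
    by (simp add: assms(2) matrix_mul_assoc)
  then show "colspace N \<subseteq> colspace M"
    unfolding colspace_def by (metis range_matrix_mul_subset)
qed

context
  fixes A B :: "complex^'n^'m" and X Y :: "complex^'m^'n"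
  assumes X: "is_penrose_inverse A X" and Y: "is_penrose_inverse B Y"
begin

lemma penrose_A: "A ** X ** A = A" "X ** A ** X = X" "cadj (A ** X) = A ** X" "cadj (X ** A) = X ** A"
  using X unfolding is_penrose_inverse_def by auto

lemma penrose_B: "B ** Y ** B = B" "Y ** B ** Y = Y" "cadj (B ** Y) = B ** Y" "cadj (Y ** B) = Y ** B"
  using Y unfolding is_penrose_inverse_def by auto

lemma penrose_A_tail: "M ** A ** X ** A = M ** A" "N ** X ** A ** X = N ** X"
  by (metis matrix_mul_assoc penrose_A(1,2))+

lemma cadj_A_absorbs_projections: "cadj A ** A ** X = cadj A" "X ** A ** cadj A = cadj A"
  by (metis cadj_mult matrix_mul_assoc penrose_A)+

lemma X_eq_cadj_mult: "X = cadj A ** cadj X ** X" "X = X ** cadj X ** cadj A"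
  by (metis cadj_mult matrix_mul_assoc penrose_A)+

lemma colspace_subset_iff: "colspace A \<subseteq> colspace B \<longleftrightarrow> B ** Y ** A = A"
  by (rule colspace_subset_iff_projection) (simp_all add: penrose_B(1) matrix_mul_assoc)

lemma colspace_cadj_subset_iff:
  "colspace (cadj A) \<subseteq> colspace (cadj B) \<longleftrightarrow> Y ** B ** cadj A = cadj A"
proof (rule colspace_subset_iff_projection)
  show "Y ** B ** cadj B = cadj B"
    by (metis cadj_mult matrix_mul_assoc penrose_B(1,4))
  show "Y ** B = cadj B ** cadj Y"
    by (metis cadj_mult penrose_B(4))
qed

lemma mult_cadj_eq_iff: "A ** cadj B ** A = A ** cadj A ** A \<longleftrightarrow> X ** B ** X = X"
proof -
  have "X ** B ** X = X \<longleftrightarrow> A ** X ** B ** X ** A = A"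
  proof
    assume "A ** X ** B ** X ** A = A"
    then have "X ** (A ** X ** B ** X ** A) ** X = X ** A ** X" by simp
    then show "X ** B ** X = X"
      by (simp add: matrix_mul_assoc penrose_A penrose_A_tail)
  next
    assume "X ** B ** X = X"
    then have "A ** (X ** B ** X) ** A = A ** X ** A" by simp
    then show "A ** X ** B ** X ** A = A"
      by (simp add: matrix_mul_assoc penrose_A)
  qed
  also have "\<dots> \<longleftrightarrow> X ** A ** cadj B ** A ** X = cadj A"
    by (metis cadj_cadj cadj_mult matrix_mul_assoc penrose_A(3,4))
  also have "\<dots> \<longleftrightarrow> A ** cadj B ** A = A ** cadj A ** A"
  proof
    assume "X ** A ** cadj B ** A ** X = cadj A"
    then have "A ** (X ** A ** cadj B ** A ** X) ** A = A ** cadj A ** A" by simp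
    then show "A ** cadj B ** A = A ** cadj A ** A"
      by (simp add: matrix_mul_assoc penrose_A penrose_A_tail)
  next
    assume "A ** cadj B ** A = A ** cadj A ** A"
    then have "X ** (A ** cadj B ** A) ** X = X ** (A ** cadj A ** A) ** X" by simp
    then show "X ** A ** cadj B ** A ** X = cadj A"
      by (simp add: matrix_mul_assoc cadj_A_absorbs_projections)
  qed
  finally show ?thesis ..
qed

lemma B_Y_A_eq_iff: "B ** Y ** A = A \<longleftrightarrow> X ** B ** Y = X"
proof
  assume "B ** Y ** A = A"
  then have "cadj A ** B ** Y = cadj A"
    by (metis cadj_mult matrix_mul_assoc penrose_B(3))
  then have "X ** cadj X ** (cadj A ** B ** Y) = X ** cadj X ** cadj A" by simp
  then show "X ** B ** Y = X"
    by (simp add: matrix_mul_assoc flip: X_eq_cadj_mult(2))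
next
  assume "X ** B ** Y = X"
  then have "cadj Y ** cadj B ** cadj X = cadj X"
    by (metis cadj_mult matrix_mul_assoc)
  moreover have "B ** Y ** cadj Y = cadj Y"
    by (metis cadj_mult matrix_mul_assoc penrose_B(2,3))
  moreover have "A = cadj X ** cadj A ** A"
    by (metis cadj_mult penrose_A(1,3))
  ultimately show "B ** Y ** A = A"
    by (metis matrix_mul_assoc)
qed

lemma Y_B_X_eq_X_if_colspace_cadj_subset:
  "colspace (cadj A) \<subseteq> colspace (cadj B) \<Longrightarrow> Y ** B ** X = X"
  unfolding colspace_cadj_subset_iff by (metis X_eq_cadj_mult(1) matrix_mul_assoc)

lemma diamond_le_iff_inverse_eqs:
  "diamond_le A B \<longleftrightarrow> X ** B ** X = X \<and> X ** B ** Y = X \<and> colspace (cadj A) \<subseteq> colspace (cadj B)"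
  unfolding diamond_le_def colspace_subset_iff B_Y_A_eq_iff mult_cadj_eq_iff by auto

lemma complement_projection_mult_X: "(mat 1 - X ** A) ** X = 0"
  by (simp add: matrix_diff_rdistrib penrose_A(2))

lemma rank_diff_eq_if_inverse_eqs:
  assumes "X ** B ** X = X" and "X ** B ** Y = X"
  shows "rank (Y - X) = rank ((mat 1 - X ** A) ** Y)"
proof -
  have factor_right: "(mat 1 - X ** A) ** (Y - X) = (mat 1 - X ** A) ** Y"
    by (simp add: matrix_diff_ldistrib complement_projection_mult_X)
  have factor_left: "(mat 1 - X ** B) ** ((mat 1 - X ** A) ** Y) = Y - X"
    using assms
    by (simp add: matrix_diff_ldistrib matrix_diff_rdistrib matrix_mul_assoc penrose_A_tail)
  show ?thesis
    using rank_mul_le_right_gen[of "mat 1 - X ** A" "Y - X"]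
      rank_mul_le_right_gen[of "mat 1 - X ** B" "(mat 1 - X ** A) ** Y"]
    unfolding factor_right factor_left by linarith
qed

lemma inverse_eqs_if_rank_diff_eq:
  assumes rank: "rank (Y - X) = rank ((mat 1 - X ** A) ** Y)" and YBX: "Y ** B ** X = X"
  shows "X ** B ** X = X \<and> X ** B ** Y = X"
proof -
  have "(mat 1 - X ** A) ** Y = (mat 1 - X ** A) ** (Y - X)"
    by (simp add: matrix_diff_ldistrib complement_projection_mult_X)
  then obtain Z where Z: "Y - X = Z ** ((mat 1 - X ** A) ** (Y - X))"
    using rank rank_mul_eq_right_imp_factor by metis
  have vanish: "X ** L = 0" if "(Y - X) ** K = X ** L" for K :: "complex^'k^'m" and L
  proof -
    have "(Y - X) ** K = Z ** ((mat 1 - X ** A) ** X) ** L"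
      by (metis Z that matrix_mul_assoc)
    with that show ?thesis
      by (simp add: complement_projection_mult_X)
  qed
  have "X ** (mat 1 - B ** X) = 0"
    by (rule vanish[of "B ** X"])
      (simp add: matrix_diff_ldistrib matrix_diff_rdistrib YBX matrix_mul_assoc)
  moreover have "X ** (mat 1 - B ** Y) = 0"
    by (rule vanish[of "B ** Y - mat 1"])
      (simp add: matrix_diff_ldistrib matrix_diff_rdistrib matrix_mul_assoc penrose_B(2))
  ultimately show ?thesis
    by (simp add: matrix_diff_ldistrib matrix_mul_assoc)
qed

lemma idempotent_factor_iff_inverse_eqs:
  assumes YBX: "Y ** B ** X = X"
  shows "(\<exists>Q. Q ** Q = Q \<and> X = Q ** Y) \<longleftrightarrow> X ** B ** X = X \<and> X ** B ** Y = X"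
proof
  assume "\<exists>Q. Q ** Q = Q \<and> X = Q ** Y"
  then obtain Q where Q: "Q ** Q = Q" "X = Q ** Y" by blast
  have "X ** B ** X = Q ** (Y ** B ** X)" and "X ** B ** Y = Q ** (Y ** B ** Y)"
    by (simp_all add: Q(2) matrix_mul_assoc)
  then show "X ** B ** X = X \<and> X ** B ** Y = X"
    by (metis Q YBX matrix_mul_assoc penrose_B(2))
next
  assume "X ** B ** X = X \<and> X ** B ** Y = X"
  then show "\<exists>Q. Q ** Q = Q \<and> X = Q ** Y"
    by (intro exI[of _ "X ** B"]) (simp add: matrix_mul_assoc)
qed

end

theorem corollary3p3:
  fixes A B :: "complex^'n^'m"
  shows "(diamond_le A B
           \<longleftrightarrow> (rank (mp_inv B - mp_inv A) = rank ((mat 1 - mp_inv A ** A) ** mp_inv B)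
                \<and> colspace (cadj A) \<subseteq> colspace (cadj B)))
       \<and> (diamond_le A B
           \<longleftrightarrow> ((\<exists>Q :: complex^'n^'n. Q ** Q = Q \<and> mp_inv A = Q ** mp_inv B)
                \<and> colspace (cadj A) \<subseteq> colspace (cadj B)))"
proof -
  have X: "is_penrose_inverse A (mp_inv A)" and Y: "is_penrose_inverse B (mp_inv B)"
    by (rule is_penrose_inverse_mp_inv)+
  show ?thesis
    unfolding diamond_le_iff_inverse_eqs[OF X Y]
    using Y_B_X_eq_X_if_colspace_cadj_subset[OF X Y]
      rank_diff_eq_if_inverse_eqs[OF X Y] inverse_eqs_if_rank_diff_eq[OF X Y]
      idempotent_factor_iff_inverse_eqs[OF X Y]
    by blast
qed

end
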